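(* Let $\nu>0$, let $U$ be the gamma process with parameter $\nu$ and $V(t)=\inf\{\tau\ge0: U(\tau)>t\}$. For every fixed $t>0$, $$\mathbb{P}(V(t)>x)\sim \left(\frac{2\pi x}{\nu}\right)^{-1/2} e^{x/\nu-t}\left(\frac{\nu t}{x}\right)^{x/\nu}\quad\text{as } x\to\infty .$$
   Context: The gamma process with parameter $\nu>0$ is the Lévy process $\{U(t),t\ge0\}$ with $U(0)=0$, stationary independent increments, and $U(t)$ having density $f(x,t)=\frac{1}{\Gamma(t/\nu)}x^{t/\nu-1}e^{-x}$, $x>0$. The inverse gamma process is $V(t)=\inf\{\tau\ge 0: U(\tau)>t\}$. Here $a(x)\sim b(x)$ means $a(x)/b(x)\to1$. *)

theory Defs
  imports "HOL-Probability.Probability"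
begin

definition gamma_proc_density :: "real \<Rightarrow> real \<Rightarrow> real \<Rightarrow> real" where
  "gamma_proc_density nu t x =
     (if x > 0 then x powr (t / nu - 1) * exp (- x) / Gamma (t / nu) else 0)"

definition gamma_process :: "'a measure \<Rightarrow> real \<Rightarrow> (real \<Rightarrow> 'a \<Rightarrow> real) \<Rightarrow> bool" where
  "gamma_process M nu U \<longleftrightarrow>
     prob_space M \<and> nu > 0 \<and>
     (\<forall>t. U t \<in> borel_measurable M) \<and>
     (AE \<omega> in M. U 0 \<omega> = 0) \<and>
     (\<forall>\<omega>\<in>space M. \<forall>s\<ge>0. continuous (at_right s) (\<lambda>\<tau>. U \<tau> \<omega>)) \<and>
     (\<forall>\<omega>\<in>space M. \<forall>s>0. \<exists>l. ((\<lambda>\<tau>. U \<tau> \<omega>) \<longlongrightarrow> l) (at_left s)) \<and>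
     (\<forall>(n::nat) (ts::nat \<Rightarrow> real). 0 \<le> ts 0 \<longrightarrow> (\<forall>i<n. ts i < ts (Suc i)) \<longrightarrow>
        prob_space.indep_vars M (\<lambda>_. borel) (\<lambda>i \<omega>. U (ts (Suc i)) \<omega> - U (ts i) \<omega>) {..<n}) \<and>
     (\<forall>s\<ge>0. \<forall>h\<ge>0. distr M borel (\<lambda>\<omega>. U (s + h) \<omega> - U s \<omega>) = distr M borel (U h)) \<and>
     (\<forall>t>0. distributed M lborel (U t) (\<lambda>x. ennreal (gamma_proc_density nu t x)))"

definition inverse_process :: "(real \<Rightarrow> 'a \<Rightarrow> real) \<Rightarrow> real \<Rightarrow> 'a \<Rightarrow> real" where
  "inverse_process U t \<omega> = Inf {\<tau>. \<tau> \<ge> 0 \<and> U \<tau> \<omega> > t}"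

end

theory Submission
  imports Defs "HOL-Real_Asymp.Real_Asymp"
begin

text \<open>
  Up to null sets, the event V(t) > x is the event U(x) \<le> t: the paths are right-continuous and
  a.s. nondecreasing along the rationals, U(x) has no atoms, and U eventually exceeds t.
  For a = x/\<nu> the law of U(x) is Gamma(a), and bounding e^-y on (0, t] below by e^-t and above by
  (t/y)^t e^-t gives
    e^-t t^a / (a \<Gamma>(a)) \<le> P(U(x) \<le> t) \<le> e^-t t^a / ((a - t) \<Gamma>(a)).
  Both bounds have the claimed asymptotics by Stirling's formula \<Gamma>(a + 1) \<sim> \<surd>(2\<pi>) a^(a+1/2) e^-a,
  proved through the remainder \<rho>(a) = ln \<Gamma>(a + 1) - (a + 1/2) ln a + a: Pade bounds on ln(1 + 1/a)
  give 0 \<le> \<rho>(a) - \<rho>(a + 1) \<le> 1/(4a) - 1/(4(a + 1)), Euler's limit formula for \<Gamma> makes the limit of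
  \<rho>(b + n) independent of b, and Legendre's duplication formula identifies it as ln(2\<pi>)/2.
\<close>

lemma ln_add_one_ge_pade:
  fixes x :: real
  assumes "0 \<le> x"
  shows "2 * x / (2 + x) \<le> ln (1 + x)"
proof -
  let ?f = "\<lambda>y::real. ln (1 + y) - 2 * y / (2 + y)"
  have "?f 0 \<le> ?f x"
  proof (rule DERIV_nonneg_imp_increasing_open[OF assms])
    fix y :: real
    assume y: "0 < y" "y < x"
    have "DERIV ?f y :> 1 / (1 + y) - (2 * (2 + y) - 2 * y) / (2 + y)\<^sup>2"
      using y by (auto intro!: derivative_eq_intros simp: power2_eq_square)
    moreover have "1 / (1 + y) - (2 * (2 + y) - 2 * y) / (2 + y)\<^sup>2 = y\<^sup>2 / ((1 + y) * (2 + y)\<^sup>2)"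
      using y by (simp add: divide_simps power2_eq_square) algebra
    ultimately show "\<exists>d. DERIV ?f y :> d \<and> 0 \<le> d"
      using y by (intro exI[of _ "y\<^sup>2 / ((1 + y) * (2 + y)\<^sup>2)"]) simp
  qed (intro continuous_intros; auto)
  then show ?thesis
    by simp
qed

lemma ln_add_one_le_pade:
  fixes x :: real
  assumes "0 \<le> x"
  shows "ln (1 + x) \<le> x * (2 + x) / (2 * (1 + x))"
proof -
  let ?f = "\<lambda>y::real. y * (2 + y) / (2 * (1 + y)) - ln (1 + y)"
  have "?f 0 \<le> ?f x"
  proof (rule DERIV_nonneg_imp_increasing_open[OF assms])
    fix y :: real
    assume y: "0 < y" "y < x"
    have "DERIV ?f y :> ((2 + y + y) * (2 * (1 + y)) - y * (2 + y) * 2) / (2 * (1 + y))\<^sup>2 - 1 / (1 + y)"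
      using y by (auto intro!: derivative_eq_intros simp: power2_eq_square)
    moreover have "((2 + y + y) * (2 * (1 + y)) - y * (2 + y) * 2) / (2 * (1 + y))\<^sup>2 - 1 / (1 + y)
        = y\<^sup>2 / (2 * (1 + y)\<^sup>2)"
      using y by (simp add: divide_simps power2_eq_square) algebra
    ultimately show "\<exists>d. DERIV ?f y :> d \<and> 0 \<le> d"
      by (intro exI[of _ "y\<^sup>2 / (2 * (1 + y)\<^sup>2)"]) simp
  qed (intro continuous_intros; auto)
  then show ?thesis
    by simp
qed

definition stirling_remainder :: "real \<Rightarrow> real" where
  "stirling_remainder a = ln (Gamma (a + 1)) - (a + 1/2) * ln a + a"

lemma ln_Gamma_plus1_real:
  fixes a :: real
  assumes "0 < a"
  shows "ln (Gamma (a + 1)) = ln a + ln (Gamma a)"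
proof -
  have "Gamma (a + 1) = a * Gamma a"
    using assms by (intro Gamma_plus1) (auto elim!: nonpos_Ints_cases)
  then show ?thesis
    using assms Gamma_real_pos[OF assms] by (simp add: ln_mult_pos)
qed

lemma stirling_remainder_diff:
  assumes "0 < a"
  shows "stirling_remainder a - stirling_remainder (a + 1) = (a + 1/2) * ln (1 + 1/a) - 1"
proof -
  have Gamma: "ln (Gamma (a + 1 + 1)) = ln (a + 1) + ln (Gamma (a + 1))"
    using assms by (intro ln_Gamma_plus1_real) simp
  have log: "ln (1 + 1/a) = ln (a + 1) - ln a"
    using assms by (simp add: field_simps ln_div)
  show ?thesis
    unfolding stirling_remainder_def log Gamma by (simp add: algebra_simps)
qed

lemma stirling_remainder_diff_bounds:
  assumes a: "0 < a"
  shows "0 \<le> stirling_remainder a - stirling_remainder (a + 1)"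
    and "stirling_remainder a - stirling_remainder (a + 1) \<le> 1 / (4 * a) - 1 / (4 * (a + 1))"
proof -
  have x: "0 \<le> 1/a"
    using a by simp
  have "1 = (a + 1/2) * (2 * (1/a) / (2 + 1/a))"
    using a by (simp add: field_simps)
  also have "\<dots> \<le> (a + 1/2) * ln (1 + 1/a)"
    using ln_add_one_ge_pade[OF x] a by (intro mult_left_mono) auto
  finally show "0 \<le> stirling_remainder a - stirling_remainder (a + 1)"
    using stirling_remainder_diff[OF a] by linarith
  have "(a + 1/2) * ln (1 + 1/a) \<le> (a + 1/2) * ((1/a) * (2 + 1/a) / (2 * (1 + 1/a)))"
    using ln_add_one_le_pade[OF x] a by (intro mult_left_mono) auto
  also have "\<dots> = 1 + (1 / (4 * a) - 1 / (4 * (a + 1)))"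
    using a by (simp add: divide_simps) algebra
  finally show "stirling_remainder a - stirling_remainder (a + 1) \<le> 1 / (4 * a) - 1 / (4 * (a + 1))"
    using stirling_remainder_diff[OF a] by simp
qed

lemma stirling_remainder_shift_limit:
  assumes b: "0 < b"
  obtains L where "(\<lambda>n. stirling_remainder (b + real n)) \<longlonglongrightarrow> L"
    and "\<And>n. 0 \<le> stirling_remainder (b + real n) - L"
    and "\<And>n. stirling_remainder (b + real n) - L \<le> 1 / (4 * (b + real n))"
proof -
  define u where "u n = stirling_remainder (b + real n)" for n
  define w where "w n = u n - 1 / (4 * (b + real n))" for n
  have shift: "b + real (Suc n) = (b + real n) + 1" for n
    by simp
  have "decseq u"
  proof (rule decseq_SucI)
    show "u (Suc n) \<le> u n" for n
      using stirling_remainder_diff_bounds(1)[of "b + real n"] b unfolding u_def shift by simp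
  qed
  have "incseq w"
  proof (rule incseq_SucI)
    show "w n \<le> w (Suc n)" for n
      using stirling_remainder_diff_bounds(2)[of "b + real n"] b unfolding w_def u_def shift by simp
  qed
  have "w 0 \<le> u i" for i
  proof -
    have "0 \<le> 1 / (4 * (b + real i))"
      using b by simp
    then show ?thesis
      using incseqD[OF \<open>incseq w\<close>, of 0 i] unfolding w_def by linarith
  qed
  then obtain L where L: "u \<longlonglongrightarrow> L" "\<And>i. L \<le> u i"
    using decseq_convergent[OF \<open>decseq u\<close>] by blast
  have "(\<lambda>n. 1 / (4 * (b + real n))) \<longlonglongrightarrow> 0"
    using b by real_asymp
  then have "w \<longlonglongrightarrow> L - 0"
    unfolding w_def by (rule tendsto_diff[OF L(1)])
  then have "w n \<le> L" for n
    using incseq_le[OF \<open>incseq w\<close>] by simp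
  then show thesis
    using that L unfolding u_def w_def by (simp add: algebra_simps)
qed

lemma Gamma_add_nat_over_fact_LIMSEQ:
  fixes b :: real
  assumes b: "0 < b"
  shows "(\<lambda>n. Gamma (b + real n + 1) / (fact n * exp (b * ln (real n)))) \<longlonglongrightarrow> 1"
proof -
  have Gb: "0 < Gamma b"
    using b by (rule Gamma_real_pos)
  have "Gamma (b + real n + 1) / (fact n * exp (b * ln (real n))) = Gamma b / Gamma_series b n" for n
  proof -
    have "pochhammer b (n + 1) = Gamma (b + real (n + 1)) / Gamma b"
      using b by (intro pochhammer_Gamma) (auto elim!: nonpos_Ints_cases)
    moreover have "0 < Gamma (b + real (n + 1))"
      using b by (intro Gamma_real_pos) simp
    ultimately show ?thesis
      using Gb unfolding Gamma_series_def by (simp add: field_simps add.assoc)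
  qed
  moreover have "(\<lambda>n. Gamma b / Gamma_series b n) \<longlonglongrightarrow> Gamma b / Gamma b"
    using Gamma_series_LIMSEQ[of b] Gb by (intro tendsto_intros) auto
  ultimately show ?thesis
    using Gb by simp
qed

lemma stirling_remainder_shift_diff_LIMSEQ:
  assumes b: "0 < b"
  shows "(\<lambda>n. stirling_remainder (b + real n) - stirling_remainder (1 + real n)) \<longlonglongrightarrow> 0"
proof -
  define R where "R c n = Gamma (c + real n + 1) / (fact n * exp (c * ln (real n)))" for c n
  have lnR: "(\<lambda>n. ln (R c n)) \<longlonglongrightarrow> 0" if "0 < c" for c
    using tendsto_ln[OF Gamma_add_nat_over_fact_LIMSEQ[OF that]] unfolding R_def by simp
  have expand: "stirling_remainder (c + real n)
      = ln (R c n) + ln (fact n) + c * ln (real n) - (c + real n + 1/2) * ln (c + real n) + c + real n"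
    if "0 < c" for c n
  proof -
    have "0 < Gamma (c + real n + 1)"
      using that by (intro Gamma_real_pos) simp
    then have "ln (Gamma (c + real n + 1)) = ln (R c n) + ln (fact n) + c * ln (real n)"
      unfolding R_def by (simp add: ln_div ln_mult_pos)
    then show ?thesis
      unfolding stirling_remainder_def by (simp add: add.assoc)
  qed
  have "(\<lambda>n. (b - 1) * ln (real n) - (b + real n + 1/2) * ln (b + real n)
      + (real n + 3/2) * ln (real n + 1) + b - 1) \<longlonglongrightarrow> 0"
    using b by real_asymp
  then have "(\<lambda>n. ln (R b n) - ln (R 1 n) + ((b - 1) * ln (real n) - (b + real n + 1/2) * ln (b + real n)
      + (real n + 3/2) * ln (real n + 1) + b - 1)) \<longlonglongrightarrow> 0 - 0 + 0"
    by (intro tendsto_intros lnR b) simp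
  moreover have "stirling_remainder (b + real n) - stirling_remainder (1 + real n)
      = ln (R b n) - ln (R 1 n) + ((b - 1) * ln (real n) - (b + real n + 1/2) * ln (b + real n)
        + (real n + 3/2) * ln (real n + 1) + b - 1)" for n
    using expand[OF b, of n] expand[of 1 n] by (simp add: algebra_simps)
  ultimately show ?thesis
    by simp
qed

lemma stirling_remainder_converges:
  obtains C where "\<And>a. 0 < a \<Longrightarrow> \<bar>stirling_remainder a - C\<bar> \<le> 1 / (4 * a)"
proof -
  obtain C where C: "(\<lambda>n. stirling_remainder (1 + real n)) \<longlonglongrightarrow> C"
    using stirling_remainder_shift_limit[OF zero_less_one] by blast
  have "\<bar>stirling_remainder a - C\<bar> \<le> 1 / (4 * a)" if a: "0 < a" for a
  proof -
    define n where "n = nat (\<lceil>a\<rceil> - 1)"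
    define b where "b = a - real n"
    have b: "0 < b" and ab: "a = b + real n"
      using a by (simp_all add: b_def n_def) linarith
    obtain L where L: "(\<lambda>n. stirling_remainder (b + real n)) \<longlonglongrightarrow> L"
      "\<And>n. 0 \<le> stirling_remainder (b + real n) - L"
      "\<And>n. stirling_remainder (b + real n) - L \<le> 1 / (4 * (b + real n))"
      using stirling_remainder_shift_limit[OF b] by blast
    have "(\<lambda>n. stirling_remainder (1 + real n)
        + (stirling_remainder (b + real n) - stirling_remainder (1 + real n))) \<longlonglongrightarrow> C + 0"
      by (intro tendsto_add C stirling_remainder_shift_diff_LIMSEQ b)
    then have "L = C"
      using L(1) LIMSEQ_unique by auto
    then show ?thesis
      using L(2,3)[of n] unfolding ab by simp
  qed
  then show thesis
    by (rule that)
qed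

lemma Gamma_legendre_duplication_real:
  fixes a :: real
  assumes a: "0 < a"
  shows "Gamma a * Gamma (a + 1/2) = exp ((1 - 2 * a) * ln 2) * sqrt pi * Gamma (2 * a)"
proof -
  have not_nonpos: "complex_of_real c \<notin> \<int>\<^sub>\<le>\<^sub>0" if "0 < c" for c
    using that by (auto simp: of_real_in_nonpos_Ints_iff elim!: nonpos_Ints_cases)
  have real_args: "complex_of_real a + 1/2 = complex_of_real (a + 1/2)"
    "2 * complex_of_real a = complex_of_real (2 * a)"
    "(1 - complex_of_real (2 * a)) * of_real (ln 2) = complex_of_real ((1 - 2 * a) * ln 2)"
    by simp_all
  have "complex_of_real a \<notin> \<int>\<^sub>\<le>\<^sub>0" "complex_of_real a + 1/2 \<notin> \<int>\<^sub>\<le>\<^sub>0"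
    unfolding real_args using a by (intro not_nonpos; simp)+
  from Gamma_legendre_duplication[OF this]
  have "complex_of_real (Gamma a) * complex_of_real (Gamma (a + 1/2))
      = complex_of_real (exp ((1 - 2 * a) * ln 2)) * complex_of_real (sqrt pi) * complex_of_real (Gamma (2 * a))"
    unfolding real_args Gamma_complex_of_real exp_of_real .
  then show ?thesis
    by (simp only: of_real_eq_iff flip: of_real_mult)
qed

lemma stirling_remainder_duplication:
  assumes a: "0 < a"
  shows "stirling_remainder (2 * a + 1) - stirling_remainder a - stirling_remainder (a + 1/2)
    = ((a + 1/2) * ln a + (a + 1) * ln (a + 1/2) + 1/2 + (2 * a + 1) * ln 2
      - (2 * a + 3/2) * ln (2 * a + 1)) - ln (sqrt pi)"
proof -
  have dup: "Gamma (a + 1) * Gamma (a + 1 + 1/2) = exp ((1 - 2 * (a + 1)) * ln 2) * sqrt pi * Gamma (2 * (a + 1))"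
    using a by (intro Gamma_legendre_duplication_real) simp
  have pos: "0 < Gamma (a + 1)" "0 < Gamma (a + 1 + 1/2)" "0 < Gamma (2 * (a + 1))"
    using a by (auto intro!: Gamma_real_pos)
  have "ln (Gamma (a + 1)) + ln (Gamma (a + 1 + 1/2))
      = (1 - 2 * (a + 1)) * ln 2 + ln (sqrt pi) + ln (Gamma (2 * (a + 1)))"
    using arg_cong[OF dup, of ln] pos by (simp add: ln_mult_pos)
  moreover have "2 * a + 1 + 1 = 2 * (a + 1)" "a + 1/2 + 1 = a + 1 + 1/2"
    by simp_all
  ultimately show ?thesis
    unfolding stirling_remainder_def by (simp add: algebra_simps)
qed

lemma stirling_remainder_tendsto: "(stirling_remainder \<longlongrightarrow> ln (2 * pi) / 2) at_top"
proof -
  obtain C where C: "\<And>a. 0 < a \<Longrightarrow> \<bar>stirling_remainder a - C\<bar> \<le> 1 / (4 * a)"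
    using stirling_remainder_converges by blast
  have "((\<lambda>a. stirling_remainder a - C) \<longlongrightarrow> 0) at_top"
  proof (rule Lim_null_comparison)
    show "\<forall>\<^sub>F a in at_top. norm (stirling_remainder a - C) \<le> 1 / (4 * a)"
      using eventually_gt_at_top[of 0] by eventually_elim (simp add: C)
  qed real_asymp
  then have lim: "(stirling_remainder \<longlongrightarrow> C) at_top"
    by (simp add: LIM_zero_cancel)
  have "((\<lambda>a. stirling_remainder (2 * a + 1) - stirling_remainder a - stirling_remainder (a + 1/2))
      \<longlongrightarrow> C - C - C) at_top"
    by (intro tendsto_diff lim filterlim_compose[OF lim]) real_asymp+
  moreover have "((\<lambda>a. stirling_remainder (2 * a + 1) - stirling_remainder a - stirling_remainder (a + 1/2))
      \<longlongrightarrow> - (ln 2 / 2) - ln (sqrt pi)) at_top"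
  proof (rule Lim_transform_eventually)
    show "((\<lambda>a. ((a + 1/2) * ln a + (a + 1) * ln (a + 1/2) + 1/2 + (2 * a + 1) * ln 2
        - (2 * a + 3/2) * ln (2 * a + 1)) - ln (sqrt pi)) \<longlongrightarrow> - (ln 2 / 2) - ln (sqrt pi)) at_top"
      by (rule tendsto_diff[OF _ tendsto_const]) real_asymp
  qed (use eventually_gt_at_top[of 0] in \<open>eventually_elim, simp add: stirling_remainder_duplication\<close>)
  ultimately have "C - C - C = - (ln 2 / 2) - ln (sqrt pi)"
    using tendsto_unique[OF trivial_limit_at_top_linorder] by blast
  then have "C = ln 2 / 2 + ln (sqrt pi)"
    by linarith
  also have "\<dots> = ln (2 * pi) / 2"
    by (simp add: ln_sqrt ln_mult_pos)
  finally show ?thesis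
    using lim by (simp only:)
qed

theorem stirling_Gamma:
  "(\<lambda>a. Gamma (a + 1)) \<sim>[at_top] (\<lambda>a. sqrt (2 * pi) * (a powr (a + 1/2) * exp (- a)))"
proof (rule asymp_equivI'_const)
  have "((\<lambda>a. exp (stirling_remainder a)) \<longlongrightarrow> exp (ln (2 * pi) / 2)) at_top"
    by (intro tendsto_exp stirling_remainder_tendsto)
  moreover have "exp (ln (2 * pi) / 2) = sqrt (2 * pi)"
    by (simp add: powr_half_sqrt[symmetric] powr_def)
  moreover have "\<forall>\<^sub>F a in at_top. exp (stirling_remainder a) = Gamma (a + 1) / (a powr (a + 1/2) * exp (- a))"
    using eventually_gt_at_top[of 0]
  proof eventually_elim
    case (elim a)
    then have "0 < Gamma (a + 1)"
      by (intro Gamma_real_pos) simp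
    have "exp (stirling_remainder a) = exp (ln (Gamma (a + 1))) / exp ((a + 1/2) * ln a) * exp a"
      unfolding stirling_remainder_def by (simp add: exp_add exp_diff)
    also have "\<dots> = Gamma (a + 1) / (a powr (a + 1/2) * exp (- a))"
      using \<open>0 < Gamma (a + 1)\<close> elim by (simp add: powr_def exp_minus field_simps)
    finally show ?case .
  qed
  ultimately show "((\<lambda>a. Gamma (a + 1) / (a powr (a + 1/2) * exp (- a))) \<longlongrightarrow> sqrt (2 * pi)) at_top"
    by (simp add: tendsto_cong)
qed simp

lemma asymp_equiv_gamma_cdf_lower_bound:
  fixes t :: real
  assumes t: "0 < t"
  shows "(\<lambda>a. exp (- t) * t powr a / (a * Gamma a))
    \<sim>[at_top] (\<lambda>a. (2 * pi * a) powr (-1/2) * exp (a - t) * (t / a) powr a)"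
proof -
  have "(\<lambda>a. exp (- t) * t powr a / Gamma (a + 1))
      \<sim>[at_top] (\<lambda>a. exp (- t) * t powr a / (sqrt (2 * pi) * (a powr (a + 1/2) * exp (- a))))"
    by (intro asymp_equiv_intros stirling_Gamma)
  moreover have "\<forall>\<^sub>F a in at_top. exp (- t) * t powr a / Gamma (a + 1) = exp (- t) * t powr a / (a * Gamma a)"
    using eventually_gt_at_top[of 0]
    by eventually_elim (subst Gamma_plus1, auto elim!: nonpos_Ints_cases)
  moreover have "\<forall>\<^sub>F a in at_top. exp (- t) * t powr a / (sqrt (2 * pi) * (a powr (a + 1/2) * exp (- a)))
      = (2 * pi * a) powr (-1/2) * exp (a - t) * (t / a) powr a"
    using eventually_gt_at_top[of 0]
  proof eventually_elim
    case (elim a)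
    have "(2 * pi * a) powr (-1/2) = 1 / (sqrt (2 * pi) * a powr (1/2))"
      using elim by (simp add: powr_minus powr_mult powr_half_sqrt divide_simps real_sqrt_mult)
    moreover have "(t / a) powr a = t powr a / a powr a"
      using elim t by (simp add: powr_divide)
    moreover have "a powr (a + 1/2) = a powr a * a powr (1/2)"
      using elim by (simp add: powr_add)
    ultimately show ?case
      using elim by (simp add: field_simps exp_diff exp_minus)
  qed
  ultimately show ?thesis
    by (rule asymp_equiv_transfer)
qed

lemma exp_neg_mult_powr_le:
  fixes t y :: real
  assumes "0 < t" "0 < y"
  shows "y powr t * exp (- y) \<le> t powr t * exp (- t)"
proof -
  have "t * ln (y / t) \<le> t * (y / t - 1)"
    using assms by (intro mult_left_mono ln_le_minus_one) auto
  then have "t * ln y - y \<le> t * ln t - t"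
    using assms by (simp add: ln_div algebra_simps)
  then show ?thesis
    using assms by (simp add: powr_def flip: exp_add)
qed

lemma nn_integral_powr_interval:
  fixes p t c :: real
  assumes "-1 < p" "0 \<le> t" "0 \<le> c"
  shows "(\<integral>\<^sup>+y. ennreal (y powr p * c) * indicator {0..t} y \<partial>lborel) = ennreal (t powr (p + 1) / (p + 1) * c)"
  using has_integral_mult_left[OF has_integral_powr_from_0[OF assms(1,2)], of c] assms
  by (intro nn_integral_has_integral_lebesgue') auto

lemma gamma_density_cdf_ge:
  fixes a t :: real
  assumes a: "0 < a" and t: "0 < t"
  shows "ennreal (exp (- t) * t powr a / (a * Gamma a))
    \<le> (\<integral>\<^sup>+y. ennreal (gamma_proc_density 1 a y) * indicator {..t} y \<partial>lborel)"
proof -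
  have G: "0 < Gamma a"
    using a by (rule Gamma_real_pos)
  have "ennreal (exp (- t) * t powr a / (a * Gamma a))
      = (\<integral>\<^sup>+y. ennreal (y powr (a - 1) * (exp (- t) / Gamma a)) * indicator {0..t} y \<partial>lborel)"
    using nn_integral_powr_interval[of "a - 1" t "exp (- t) / Gamma a"] a t G by simp
  also have "\<dots> \<le> (\<integral>\<^sup>+y. ennreal (gamma_proc_density 1 a y) * indicator {..t} y \<partial>lborel)"
  proof (intro nn_integral_mono)
    fix y :: real
    show "ennreal (y powr (a - 1) * (exp (- t) / Gamma a)) * indicator {0..t} y
        \<le> ennreal (gamma_proc_density 1 a y) * indicator {..t} y"
    proof (cases "0 < y \<and> y \<le> t")
      case True
      then have "y powr (a - 1) * (exp (- t) / Gamma a) \<le> y powr (a - 1) * (exp (- y) / Gamma a)"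
        using G by (intro mult_left_mono divide_right_mono) auto
      then show ?thesis
        using True by (simp add: gamma_proc_density_def indicator_def ennreal_leI)
    qed (auto simp: indicator_def)
  qed
  finally show ?thesis .
qed

lemma gamma_density_cdf_le:
  fixes a t :: real
  assumes t: "0 < t" and a: "t < a"
  shows "(\<integral>\<^sup>+y. ennreal (gamma_proc_density 1 a y) * indicator {..t} y \<partial>lborel)
    \<le> ennreal (exp (- t) * t powr a / ((a - t) * Gamma a))"
proof -
  have G: "0 < Gamma a"
    using t a by (intro Gamma_real_pos) simp
  define c where "c = t powr t * exp (- t) / Gamma a"
  have "(\<integral>\<^sup>+y. ennreal (gamma_proc_density 1 a y) * indicator {..t} y \<partial>lborel)
      \<le> (\<integral>\<^sup>+y. ennreal (y powr (a - 1 - t) * c) * indicator {0..t} y \<partial>lborel)"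
  proof (intro nn_integral_mono)
    fix y :: real
    show "ennreal (gamma_proc_density 1 a y) * indicator {..t} y \<le> ennreal (y powr (a - 1 - t) * c) * indicator {0..t} y"
    proof (cases "0 < y \<and> y \<le> t")
      case True
      then have "y powr (a - 1) * exp (- y) = y powr (a - 1 - t) * (y powr t * exp (- y))"
        by (simp add: powr_add[symmetric])
      also have "\<dots> \<le> y powr (a - 1 - t) * (t powr t * exp (- t))"
        using True t by (intro mult_left_mono exp_neg_mult_powr_le) auto
      finally show ?thesis
        using True G by (simp add: gamma_proc_density_def indicator_def c_def divide_right_mono ennreal_leI)
    qed (auto simp: gamma_proc_density_def indicator_def)
  qed
  also have "\<dots> = ennreal (t powr (a - t) / (a - t) * c)"
    using nn_integral_powr_interval[of "a - 1 - t" t c] t a G by (simp add: c_def)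
  also have "t powr (a - t) / (a - t) * c = exp (- t) * t powr a / ((a - t) * Gamma a)"
  proof -
    have "t powr a = t powr (a - t) * t powr t"
      using t by (simp flip: powr_add)
    then show ?thesis
      using a G by (simp add: c_def field_simps)
  qed
  finally show ?thesis .
qed

lemma gamma_process_emeasure_atMost:
  assumes gp: "gamma_process M nu U" and x: "0 < x"
  shows "emeasure M {\<omega> \<in> space M. U x \<omega> \<le> t}
    = (\<integral>\<^sup>+y. ennreal (gamma_proc_density 1 (x / nu) y) * indicator {..t} y \<partial>lborel)"
proof -
  have "distributed M lborel (U x) (\<lambda>y. ennreal (gamma_proc_density nu x y))"
    using gp x by (simp add: gamma_process_def)
  moreover have "{\<omega> \<in> space M. U x \<omega> \<le> t} = U x -` {..t} \<inter> space M"
    by auto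
  moreover have "gamma_proc_density nu x = gamma_proc_density 1 (x / nu)"
    by (simp add: gamma_proc_density_def fun_eq_iff)
  ultimately show ?thesis
    using distributed_emeasure[of M lborel "U x" _ "{..t}"] by simp
qed

lemma gamma_process_prob_le_bounds:
  assumes gp: "gamma_process M nu U" and t: "0 < t" and x: "t < x / nu"
  shows "exp (- t) * t powr (x / nu) / (x / nu * Gamma (x / nu)) \<le> measure M {\<omega> \<in> space M. U x \<omega> \<le> t}"
    and "measure M {\<omega> \<in> space M. U x \<omega> \<le> t} \<le> exp (- t) * t powr (x / nu) / ((x / nu - t) * Gamma (x / nu))"
proof -
  interpret prob_space M
    using gp by (simp add: gamma_process_def)
  have a: "0 < x / nu"
    using t x by linarith
  then have "0 < x"
    using gp by (simp add: gamma_process_def zero_less_divide_iff)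
  then have E: "ennreal (measure M {\<omega> \<in> space M. U x \<omega> \<le> t})
      = (\<integral>\<^sup>+y. ennreal (gamma_proc_density 1 (x / nu) y) * indicator {..t} y \<partial>lborel)"
    using gamma_process_emeasure_atMost[OF gp] by (simp add: emeasure_eq_measure)
  show "exp (- t) * t powr (x / nu) / (x / nu * Gamma (x / nu)) \<le> measure M {\<omega> \<in> space M. U x \<omega> \<le> t}"
    using gamma_density_cdf_ge[OF a t] by (simp add: E[symmetric] ennreal_le_iff)
  have "0 < Gamma (x / nu)"
    using a by (rule Gamma_real_pos)
  then show "measure M {\<omega> \<in> space M. U x \<omega> \<le> t} \<le> exp (- t) * t powr (x / nu) / ((x / nu - t) * Gamma (x / nu))"
    using gamma_density_cdf_le[OF t x] x by (simp add: E[symmetric] ennreal_le_iff)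
qed

lemma gamma_process_prob_le_asymp:
  assumes gp: "gamma_process M nu U" and t: "0 < t"
  shows "(\<lambda>x. measure M {\<omega> \<in> space M. U x \<omega> \<le> t})
    \<sim>[at_top] (\<lambda>x. (2 * pi * x / nu) powr (-1/2) * exp (x / nu - t) * (nu * t / x) powr (x / nu))"
proof -
  have nu: "0 < nu"
    using gp by (simp add: gamma_process_def)
  define l where "l a = exp (- t) * t powr a / (a * Gamma a)" for a
  define h where "h a = (2 * pi * a) powr (-1/2) * exp (a - t) * (t / a) powr a" for a
  have lh: "l \<sim>[at_top] h"
    unfolding l_def h_def by (rule asymp_equiv_gamma_cdf_lower_bound[OF t])
  have "(\<lambda>a. l a * (a / (a - t))) \<sim>[at_top] (\<lambda>a. h a * 1)"
    by (intro asymp_equiv_intros lh) real_asymp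
  then have uh: "(\<lambda>a. l a * (a / (a - t))) \<sim>[at_top] h"
    by simp
  have scale: "filterlim (\<lambda>x. x / nu) at_top at_top"
    using nu by real_asymp
  have asymp: "(\<lambda>x. measure M {\<omega> \<in> space M. U x \<omega> \<le> t}) \<sim>[at_top] (\<lambda>x. h (x / nu))"
  proof (rule asymp_equiv_sandwich_real)
    show "(\<lambda>x. l (x / nu)) \<sim>[at_top] (\<lambda>x. h (x / nu))"
      by (rule asymp_equiv_compose'[OF lh scale])
    show "(\<lambda>x. l (x / nu) * (x / nu / (x / nu - t))) \<sim>[at_top] (\<lambda>x. h (x / nu))"
      by (rule asymp_equiv_compose'[OF uh scale])
    show "\<forall>\<^sub>F x in at_top. measure M {\<omega> \<in> space M. U x \<omega> \<le> t}
        \<in> {l (x / nu)..l (x / nu) * (x / nu / (x / nu - t))}"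
      using filterlim_at_top_dense[THEN iffD1, OF scale, rule_format, of t]
    proof eventually_elim
      case (elim x)
      then have "0 < x / nu"
        using t by linarith
      moreover have "0 < Gamma (x / nu)"
        using \<open>0 < x / nu\<close> by (rule Gamma_real_pos)
      ultimately have "exp (- t) * t powr (x / nu) / ((x / nu - t) * Gamma (x / nu))
          = l (x / nu) * (x / nu / (x / nu - t))"
        using elim by (simp add: l_def divide_simps)
      then show ?case
        using gamma_process_prob_le_bounds[OF gp t elim] by (simp add: l_def)
    qed
  qed
  have "\<forall>\<^sub>F x in at_top. h (x / nu) = (2 * pi * x / nu) powr (-1/2) * exp (x / nu - t) * (nu * t / x) powr (x / nu)"
    using eventually_gt_at_top[of 0] by eventually_elim (use nu in \<open>simp add: h_def mult.commute\<close>)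
  then show ?thesis
    using asymp_equiv_transfer[OF asymp] by simp
qed

lemma right_continuous_rat_witness:
  fixes f :: "real \<Rightarrow> real"
  assumes rc: "continuous (at_right s) f" and "c < f s" "s < b"
  obtains q :: rat where "s < real_of_rat q" "real_of_rat q < b" "c < f (real_of_rat q)"
proof -
  have "\<forall>\<^sub>F y in at_right s. c < f y"
    using rc \<open>c < f s\<close> by (simp add: continuous_within order_tendstoD(1))
  then obtain b' where b': "s < b'" "\<And>y. s < y \<Longrightarrow> y < b' \<Longrightarrow> c < f y"
    by (auto simp: eventually_at_right_field)
  obtain r where r: "r \<in> \<rat>" "s < r" "r < min b b'"
    using Rats_dense_in_real[of s "min b b'"] \<open>s < b\<close> b'(1) by auto
  from r(1) obtain q where "r = real_of_rat q"
    by (auto elim: Rats_cases)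
  with r b'(2)[of r] show thesis
    by (intro that[of q]) auto
qed

lemma right_continuous_le_rat:
  fixes f :: "real \<Rightarrow> real"
  assumes rc: "continuous (at_right s) f" and "s < b"
    and le: "\<And>q::rat. s < real_of_rat q \<Longrightarrow> real_of_rat q < b \<Longrightarrow> f (real_of_rat q) \<le> c"
  shows "f s \<le> c"
proof (rule ccontr)
  assume "\<not> f s \<le> c"
  then obtain q :: rat where "s < real_of_rat q" "real_of_rat q < b" "c < f (real_of_rat q)"
    using right_continuous_rat_witness[OF rc _ \<open>s < b\<close>] by (metis not_le)
  with le show False
    by fastforce
qed

lemma exceed_set_nonempty_iff_rat:
  fixes f :: "real \<Rightarrow> real"
  assumes rc: "\<And>s. 0 \<le> s \<Longrightarrow> continuous (at_right s) f"
  shows "{\<tau>. 0 \<le> \<tau> \<and> t < f \<tau>} \<noteq> {} \<longleftrightarrow> (\<exists>q::rat. 0 \<le> real_of_rat q \<and> t < f (real_of_rat q))"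
proof
  assume "{\<tau>. 0 \<le> \<tau> \<and> t < f \<tau>} \<noteq> {}"
  then obtain \<tau> where \<tau>: "0 \<le> \<tau>" "t < f \<tau>"
    by auto
  then obtain q :: rat where q: "\<tau> < real_of_rat q" "t < f (real_of_rat q)"
    using right_continuous_rat_witness[OF rc[OF \<tau>(1)] \<tau>(2), of "\<tau> + 1"] by auto
  then have "0 \<le> real_of_rat q"
    using \<tau>(1) by linarith
  with q(2) show "\<exists>q::rat. 0 \<le> real_of_rat q \<and> t < f (real_of_rat q)"
    by blast
next
  assume "\<exists>q::rat. 0 \<le> real_of_rat q \<and> t < f (real_of_rat q)"
  then obtain q :: rat where "real_of_rat q \<in> {\<tau>. 0 \<le> \<tau> \<and> t < f \<tau>}"
    by auto
  then show "{\<tau>. 0 \<le> \<tau> \<and> t < f \<tau>} \<noteq> {}"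
    by blast
qed

lemma less_Inf_exceed_set_iff_rat:
  fixes f :: "real \<Rightarrow> real"
  assumes rc: "\<And>s. 0 \<le> s \<Longrightarrow> continuous (at_right s) f"
    and ne: "{\<tau>. 0 \<le> \<tau> \<and> t < f \<tau>} \<noteq> {}"
  shows "x < Inf {\<tau>. 0 \<le> \<tau> \<and> t < f \<tau>} \<longleftrightarrow>
    (\<exists>r::rat. x < real_of_rat r \<and>
      (\<forall>q::rat. 0 \<le> real_of_rat q \<longrightarrow> real_of_rat q < real_of_rat r \<longrightarrow> f (real_of_rat q) \<le> t))"
    (is "x < Inf ?S \<longleftrightarrow> (\<exists>r. x < real_of_rat r \<and> ?below r)")
proof
  assume "x < Inf ?S"
  then obtain r' where r': "r' \<in> \<rat>" "x < r'" "r' < Inf ?S"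
    using Rats_dense_in_real by blast
  from r'(1) obtain r where r: "r' = real_of_rat r"
    by (auto elim: Rats_cases)
  have "?below r"
  proof (intro allI impI)
    fix q :: rat
    assume "0 \<le> real_of_rat q" "real_of_rat q < real_of_rat r"
    moreover have "Inf ?S \<le> real_of_rat q" if "real_of_rat q \<in> ?S"
      using that by (intro cInf_lower bdd_belowI[of _ 0]) auto
    ultimately show "f (real_of_rat q) \<le> t"
      using r r' by force
  qed
  with r r' show "\<exists>r. x < real_of_rat r \<and> ?below r"
    by blast
next
  assume "\<exists>r. x < real_of_rat r \<and> ?below r"
  then obtain r where r: "x < real_of_rat r" "?below r"
    by blast
  have "real_of_rat r \<le> Inf ?S"
  proof (rule cInf_greatest[OF ne])
    fix \<tau>
    assume "\<tau> \<in> ?S"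
    then have \<tau>: "0 \<le> \<tau>" "t < f \<tau>"
      by auto
    show "real_of_rat r \<le> \<tau>"
    proof (rule ccontr)
      assume "\<not> real_of_rat r \<le> \<tau>"
      moreover have "f (real_of_rat q) \<le> t" if "\<tau> < real_of_rat q" "real_of_rat q < real_of_rat r" for q
        using r(2) \<tau>(1) that by (meson less_imp_le order_trans)
      ultimately have "f \<tau> \<le> t"
        by (intro right_continuous_le_rat[OF rc[OF \<tau>(1)], of "real_of_rat r"]) auto
      with \<tau>(2) show False
        by simp
    qed
  qed
  with r(1) show "x < Inf ?S"
    by linarith
qed

lemma less_Inf_exceed_set:
  fixes f :: "real \<Rightarrow> real"
  assumes rc: "\<And>s. 0 \<le> s \<Longrightarrow> continuous (at_right s) f"
    and ne: "{\<tau>. 0 \<le> \<tau> \<and> t < f \<tau>} \<noteq> {}"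
    and x: "0 \<le> x" "f x < t"
    and mono: "\<And>q::rat. 0 \<le> real_of_rat q \<Longrightarrow> real_of_rat q \<le> x \<Longrightarrow> f (real_of_rat q) \<le> f x"
  shows "x < Inf {\<tau>. 0 \<le> \<tau> \<and> t < f \<tau>}"
proof -
  have "\<forall>\<^sub>F y in at_right x. f y < t"
    using rc[OF x(1)] x(2) by (simp add: continuous_within order_tendstoD(2))
  then obtain b where b: "x < b" "\<And>y. x < y \<Longrightarrow> y < b \<Longrightarrow> f y < t"
    by (auto simp: eventually_at_right_field)
  have "b \<le> Inf {\<tau>. 0 \<le> \<tau> \<and> t < f \<tau>}"
  proof (rule cInf_greatest[OF ne])
    fix \<tau>
    assume "\<tau> \<in> {\<tau>. 0 \<le> \<tau> \<and> t < f \<tau>}"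
    then have \<tau>: "0 \<le> \<tau>" "t < f \<tau>"
      by auto
    have below: "f \<tau> \<le> f x" if "\<tau> < x"
    proof (rule right_continuous_le_rat[OF rc[OF \<tau>(1)] that])
      fix q :: rat
      assume "\<tau> < real_of_rat q" "real_of_rat q < x"
      with \<tau>(1) show "f (real_of_rat q) \<le> f x"
        by (intro mono) linarith+
    qed
    show "b \<le> \<tau>"
    proof (rule ccontr)
      assume "\<not> b \<le> \<tau>"
      then have "\<tau> < b"
        by simp
      consider "\<tau> < x" | "\<tau> = x" | "x < \<tau>"
        by linarith
      then show False
        using below b(2)[OF _ \<open>\<tau> < b\<close>] \<tau>(2) x(2) by cases force+
    qed
  qed
  with b(1) show ?thesis
    by linarith
qed

lemma inverse_process_gt_measurable:
  assumes meas: "\<And>\<tau>. U \<tau> \<in> borel_measurable M"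
    and rc: "\<And>\<omega> s. \<omega> \<in> space M \<Longrightarrow> 0 \<le> s \<Longrightarrow> continuous (at_right s) (\<lambda>\<tau>. U \<tau> \<omega>)"
  shows "{\<omega> \<in> space M. x < inverse_process U t \<omega>} \<in> sets M"
proof -
  \<comment> \<open>A path that never exceeds t gives the unspecified value Inf {} for V(t).\<close>
  define E where "E \<omega> \<longleftrightarrow> (\<exists>q::rat. 0 \<le> real_of_rat q \<and> t < U (real_of_rat q) \<omega>)" for \<omega>
  define R where "R \<omega> \<longleftrightarrow> (\<exists>r::rat. x < real_of_rat r \<and>
    (\<forall>q::rat. 0 \<le> real_of_rat q \<longrightarrow> real_of_rat q < real_of_rat r \<longrightarrow> U (real_of_rat q) \<omega> \<le> t))" for \<omega>
  have "x < inverse_process U t \<omega> \<longleftrightarrow> (\<not> E \<omega> \<and> x < Inf {}) \<or> (E \<omega> \<and> R \<omega>)" if "\<omega> \<in> space M" for \<omega>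
  proof (cases "{\<tau>. 0 \<le> \<tau> \<and> t < U \<tau> \<omega>} = {}")
    case True
    then have "\<not> E \<omega>"
      using exceed_set_nonempty_iff_rat[OF rc[OF that], of t] unfolding E_def by blast
    then show ?thesis
      unfolding inverse_process_def True by simp
  next
    case False
    then have "E \<omega>"
      using exceed_set_nonempty_iff_rat[OF rc[OF that], of t] unfolding E_def by blast
    with False show ?thesis
      using less_Inf_exceed_set_iff_rat[OF rc[OF that] False, of x] unfolding inverse_process_def R_def by simp
  qed
  then have "{\<omega> \<in> space M. x < inverse_process U t \<omega>} = {\<omega> \<in> space M. (\<not> E \<omega> \<and> x < Inf {}) \<or> (E \<omega> \<and> R \<omega>)}"
    by auto
  also have "\<dots> \<in> sets M"
    unfolding E_def R_def using meas by measurable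
  finally show ?thesis .
qed

lemma distributed_AE_of_density:
  fixes X :: "'a \<Rightarrow> real"
  assumes X: "distributed M lborel X (\<lambda>x. ennreal (f x))" and P: "AE x in lborel. 0 < f x \<longrightarrow> P x"
  shows "AE \<omega> in M. P (X \<omega>)"
proof (rule AE_distrD[OF distributed_measurable[OF X]])
  have "AE x in density lborel (\<lambda>x. ennreal (f x)). P x"
    by (subst AE_density[OF distributed_borel_measurable[OF X]]) (use P in \<open>auto elim: eventually_mono\<close>)
  then show "AE x in distr M lborel X. P x"
    by (simp only: distributed_distr_eq_density[OF X])
qed

lemma gamma_process_AE_pos_neq:
  assumes gp: "gamma_process M nu U" and x: "0 < x"
  shows "AE \<omega> in M. 0 < U x \<omega> \<and> U x \<omega> \<noteq> c"
proof (rule distributed_AE_of_density)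
  show "distributed M lborel (U x) (\<lambda>y. ennreal (gamma_proc_density nu x y))"
    using gp x by (simp add: gamma_process_def)
  show "AE y in lborel. 0 < gamma_proc_density nu x y \<longrightarrow> 0 < y \<and> y \<noteq> c"
    using AE_lborel_singleton[of c] by eventually_elim (simp add: gamma_proc_density_def)
qed

lemma gamma_process_AE_le:
  assumes gp: "gamma_process M nu U" and s: "0 \<le> s" "s \<le> x"
  shows "AE \<omega> in M. U s \<omega> \<le> U x \<omega>"
proof (cases "s = x")
  case False
  define h where "h = x - s"
  have h: "0 < h" "x = s + h"
    using s False by (simp_all add: h_def)
  have meas[measurable]: "U \<tau> \<in> borel_measurable M" for \<tau>
    using gp by (simp add: gamma_process_def)
  have "AE \<omega> in M. 0 < U h \<omega>"
    using gamma_process_AE_pos_neq[OF gp h(1), of 0] by eventually_elim simp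
  then have "AE y in distr M borel (U h). 0 < y"
    by (subst AE_distr_iff) simp_all
  also have "distr M borel (U h) = distr M borel (\<lambda>\<omega>. U (s + h) \<omega> - U s \<omega>)"
    using gp s(1) h(1) by (simp add: gamma_process_def)
  finally have "AE \<omega> in M. 0 < U (s + h) \<omega> - U s \<omega>"
    by (rule AE_distrD[rotated]) simp
  then show ?thesis
    by eventually_elim (simp add: h(2))
qed simp

lemma gamma_process_AE_le_rat:
  assumes gp: "gamma_process M nu U"
  shows "AE \<omega> in M. \<forall>q::rat. 0 \<le> real_of_rat q \<longrightarrow> real_of_rat q \<le> x \<longrightarrow> U (real_of_rat q) \<omega> \<le> U x \<omega>"
proof (subst AE_all_countable, intro allI)
  fix q :: rat
  show "AE \<omega> in M. 0 \<le> real_of_rat q \<longrightarrow> real_of_rat q \<le> x \<longrightarrow> U (real_of_rat q) \<omega> \<le> U x \<omega>"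
    using gamma_process_AE_le[OF gp, of "real_of_rat q" x]
    by (cases "0 \<le> real_of_rat q \<and> real_of_rat q \<le> x") (auto elim: eventually_mono)
qed

lemma gamma_process_AE_exceeds:
  assumes gp: "gamma_process M nu U" and t: "0 < t"
  shows "AE \<omega> in M. \<exists>n::nat. t < U (real n) \<omega>"
proof -
  interpret prob_space M
    using gp by (simp add: gamma_process_def)
  have nu: "0 < nu" and meas[measurable]: "\<And>\<tau>. U \<tau> \<in> borel_measurable M"
    using gp by (simp_all add: gamma_process_def)
  define N where "N = {\<omega> \<in> space M. \<forall>n::nat. U (real n) \<omega> \<le> t}"
  have N: "N \<in> sets M"
    unfolding N_def by measurable
  have "((\<lambda>x. (2 * pi * x / nu) powr (-1/2) * exp (x / nu - t) * (nu * t / x) powr (x / nu)) \<longlongrightarrow> 0) at_top"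
    using nu t by real_asymp
  then have "((\<lambda>x. measure M {\<omega> \<in> space M. U x \<omega> \<le> t}) \<longlongrightarrow> 0) at_top"
    using tendsto_asymp_equiv_cong[OF gamma_process_prob_le_asymp[OF gp t]] by simp
  then have "(\<lambda>n. measure M {\<omega> \<in> space M. U (real n) \<omega> \<le> t}) \<longlonglongrightarrow> 0"
    by (rule filterlim_compose) (rule filterlim_real_sequentially)
  moreover have "measure M N \<le> measure M {\<omega> \<in> space M. U (real n) \<omega> \<le> t}" for n
    unfolding N_def by (intro finite_measure_mono) auto
  ultimately have "measure M N \<le> 0"
    by (intro LIMSEQ_le_const) auto
  then have "emeasure M N = 0"
    by (simp add: emeasure_eq_measure measure_le_0_iff)
  then show ?thesis
    using N by (intro AE_I[of _ _ N]) (auto simp: N_def not_less)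
qed

lemma gamma_process_inverse_gt_prob:
  assumes gp: "gamma_process M nu U" and t: "0 < t" and x: "0 < x"
  shows "measure M {\<omega> \<in> space M. x < inverse_process U t \<omega>} = measure M {\<omega> \<in> space M. U x \<omega> \<le> t}"
proof -
  interpret prob_space M
    using gp by (simp add: gamma_process_def)
  have meas[measurable]: "\<And>\<tau>. U \<tau> \<in> borel_measurable M"
    and rc: "\<And>\<omega> s. \<omega> \<in> space M \<Longrightarrow> 0 \<le> s \<Longrightarrow> continuous (at_right s) (\<lambda>\<tau>. U \<tau> \<omega>)"
    using gp by (simp_all add: gamma_process_def)
  let ?D = "{\<omega> \<in> space M. x < inverse_process U t \<omega>}"
  show ?thesis
  proof (rule antisym)
    have "Inf {\<tau>. 0 \<le> \<tau> \<and> t < U \<tau> \<omega>} \<le> x" if "t < U x \<omega>" for \<omega>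
      using that x by (intro cInf_lower bdd_belowI[of _ 0]) auto
    then have "?D \<subseteq> {\<omega> \<in> space M. U x \<omega> \<le> t}"
      unfolding inverse_process_def by (auto simp: not_le[symmetric])
    then show "measure M ?D \<le> measure M {\<omega> \<in> space M. U x \<omega> \<le> t}"
      by (intro finite_measure_mono) auto
  next
    have "AE \<omega> in M. \<omega> \<in> {\<omega> \<in> space M. U x \<omega> \<le> t} \<longrightarrow> \<omega> \<in> ?D"
      using gamma_process_AE_le_rat[OF gp, of x] gamma_process_AE_exceeds[OF gp t]
        gamma_process_AE_pos_neq[OF gp x, of t]
    proof eventually_elim
      case (elim \<omega>)
      show ?case
      proof
        assume "\<omega> \<in> {\<omega> \<in> space M. U x \<omega> \<le> t}"
        moreover obtain n :: nat where "t < U (real n) \<omega>"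
          using elim(2) by blast
        then have "real n \<in> {\<tau>. 0 \<le> \<tau> \<and> t < U \<tau> \<omega>}"
          by simp
        then have "{\<tau>. 0 \<le> \<tau> \<and> t < U \<tau> \<omega>} \<noteq> {}"
          by blast
        ultimately show "\<omega> \<in> ?D"
          using elim(1,3) x less_Inf_exceed_set[OF rc, of \<omega> t x] unfolding inverse_process_def by auto
      qed
    qed
    moreover have "?D \<in> sets M"
      using meas rc by (rule inverse_process_gt_measurable)
    ultimately show "measure M {\<omega> \<in> space M. U x \<omega> \<le> t} \<le> measure M ?D"
      by (rule finite_measure_mono_AE)
  qed
qed

theorem mainTheorem3:
  fixes M :: "'a measure" and nu t :: real and U :: "real \<Rightarrow> 'a \<Rightarrow> real"
  assumes "nu > 0"
    and "gamma_process M nu U"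
    and "t > 0"
  shows "(\<lambda>x. measure M {\<omega> \<in> space M. inverse_process U t \<omega> > x})
           \<sim>[at_top] (\<lambda>x. (2 * pi * x / nu) powr (-1/2) * exp (x / nu - t) * (nu * t / x) powr (x / nu))"
proof -
  \<comment> \<open>The hypothesis nu > 0 is already part of gamma_process.\<close>
  have "\<forall>\<^sub>F x in at_top. measure M {\<omega> \<in> space M. U x \<omega> \<le> t} = measure M {\<omega> \<in> space M. x < inverse_process U t \<omega>}"
    using eventually_gt_at_top[of 0]
    by eventually_elim (simp add: gamma_process_inverse_gt_prob[OF assms(2,3)])
  with gamma_process_prob_le_asymp[OF assms(2,3)] show ?thesis
    by (rule asymp_equiv_transfer) simp
qed

end
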